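(* Let $\tau\in\mathcal{H}$ with $\Im(\tau)\ge\sqrt3/4$ and $z\in\mathbb{C}$ with $0\le\Im(z)\le\Im(\tau)/4$. Then the optimal F sequence starting from $(\theta_{00}^2(z,\tau),\theta_{01}^2(z,\tau),\theta_{00}^2(0,\tau),\theta_{01}^2(0,\tau))$ converges quadratically to $(1,1,1,1)$ (each of its four coordinate sequences is quadratically convergent with limit $1$).
   Context: For $z\in\mathbb{C}$ and $\tau$ in the upper half-plane $\mathcal{H}=\{\tau\in\mathbb{C}:\Im\tau>0\}$, $\theta(z,\tau)=\sum_{n\in\mathbb{Z}}\exp(\pi i\tau n^2+2\pi i n z)$; $\theta_{00}(z,\tau)=\theta(z,\tau)$, $\theta_{01}(z,\tau)=\theta(z+\tfrac12,\tau)$. Optimal F sequence: given $(x_0,y_0,z_0,t_0)\in\mathbb{C}^4$, define recursively $$(x_{n+1},y_{n+1},z_{n+1},t_{n+1})=\Big(\tfrac{\sqrt{x_n}\sqrt{z_n}+\sqrt{y_n}\sqrt{t_n}}{2},\ \tfrac{\sqrt{x_n}\sqrt{t_n}+\sqrt{y_n}\sqrt{z_n}}{2},\ \tfrac{z_n+t_n}{2},\ \sqrt{z_n}\sqrt{t_n}\Big),$$ where at each rank the square roots are chosen "good": $\Re\sqrt{x_n}\ge0$, $\Re\sqrt{z_n}\ge0$; either $|\sqrt{x_n}-\sqrt{y_n}|<|\sqrt{x_n}+\sqrt{y_n}|$ or equality and $\Im(\sqrt{y_n}/\sqrt{x_n})>0$; either $|\sqrt{z_n}-\sqrt{t_n}|<|\sqrt{z_n}+\sqrt{t_n}|$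 or equality and $\Im(\sqrt{t_n}/\sqrt{z_n})>0$. A complex sequence $(a_n)$ converging to $\ell$ is quadratically convergent if there is $C>0$ such that $|a_{n+1}-a_n|\le C|a_n-a_{n-1}|^2$ for all $n$ large enough. *)

theory Defs
  imports "HOL-Analysis.Analysis"
begin

definition jtheta :: "complex \<Rightarrow> complex \<Rightarrow> complex" where
  "jtheta z \<tau> = (\<Sum>\<^sub>\<infinity>n\<in>(UNIV::int set).
      exp (complex_of_real pi * \<i> * \<tau> * (of_int n)^2 + 2 * complex_of_real pi * \<i> * of_int n * z))"

definition theta00 :: "complex \<Rightarrow> complex \<Rightarrow> complex" where
  "theta00 z \<tau> = jtheta z \<tau>"

definition theta01 :: "complex \<Rightarrow> complex \<Rightarrow> complex" where
  "theta01 z \<tau> = jtheta (z + 1/2) \<tau>"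

definition good_roots :: "complex \<Rightarrow> complex \<Rightarrow> complex \<Rightarrow> complex \<Rightarrow> bool" where
  "good_roots u v a b \<longleftrightarrow> a^2 = u \<and> b^2 = v \<and> Re a \<ge> 0 \<and>
     (cmod (a - b) < cmod (a + b) \<or> (cmod (a - b) = cmod (a + b) \<and> Im (b / a) > 0))"

definition optimal_F_seq ::
  "(nat \<Rightarrow> complex) \<Rightarrow> (nat \<Rightarrow> complex) \<Rightarrow> (nat \<Rightarrow> complex) \<Rightarrow> (nat \<Rightarrow> complex) \<Rightarrow>
   complex \<Rightarrow> complex \<Rightarrow> complex \<Rightarrow> complex \<Rightarrow> bool" where
  "optimal_F_seq x y z t x0 y0 z0 t0 \<longleftrightarrow>
     x 0 = x0 \<and> y 0 = y0 \<and> z 0 = z0 \<and> t 0 = t0 \<and>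
     (\<forall>n. \<exists>a b c d. good_roots (x n) (y n) a b \<and> good_roots (z n) (t n) c d \<and>
        x (Suc n) = (a * c + b * d) / 2 \<and> y (Suc n) = (a * d + b * c) / 2 \<and>
        z (Suc n) = (z n + t n) / 2 \<and> t (Suc n) = c * d)"

definition quad_convergent :: "(nat \<Rightarrow> complex) \<Rightarrow> complex \<Rightarrow> bool" where
  "quad_convergent a l \<longleftrightarrow> a \<longlonglongrightarrow> l \<and>
     (\<exists>C>0. \<forall>\<^sub>F n in sequentially. cmod (a (Suc n) - a n) \<le> C * (cmod (a n - a (n - 1)))^2)"

end

theory Submission
  imports Defs "HOL-Complex_Analysis.Complex_Analysis" "HOL-Library.Nat_Bijection"
begin

text \<open>The duplication formula \<open>\<theta>(x)\<theta>(y) + \<theta>(x+\<onehalf>)\<theta>(y+\<onehalf>) = 2 \<theta>(x+y,2\<tau>) \<theta>(x-y,2\<tau>)\<close>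
  shows that one F step sends the squared theta values at \<open>\<tau>\<close> to those at \<open>2\<tau>\<close>, provided the good
  square roots are \<open>\<theta>\<^sub>0\<^sub>0\<close> and \<open>\<theta>\<^sub>0\<^sub>1\<close> themselves. In the region of the theorem the theta series are
  dominated by their constant term, which forces exactly this choice. Hence the \<open>n\<close>-th term of each
  coordinate is \<open>F(q^(2^n))\<close> for a function \<open>F\<close> holomorphic in the nome \<open>q = exp(\<pi> i \<tau>)\<close> on the unit
  disc with \<open>F(0) = 1\<close>. Writing \<open>F(u\<^sup>2) - F(u) = u\<^sup>m H(u)\<close> with \<open>H(0) \<noteq> 0\<close>, consecutive differences
  along \<open>q\<^sub>n = q^(2^n)\<close> are \<open>q\<^sub>n\<^sup>m H(q\<^sub>n)\<close>, and since \<open>q\<^sub>n\<^sub>+\<^sub>1 = q\<^sub>n\<^sup>2\<close> they decay quadratically.\<close>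

section \<open>Series over the integers\<close>

lemma has_sum_power_abs_int_tail:
  fixes r :: real
  assumes "0 \<le> r" "r < 1" "N \<ge> 1"
  shows "((\<lambda>k::int. r ^ nat \<bar>k\<bar>) has_sum (2 * r ^ nat N / (1 - r))) {k. \<bar>k\<bar> \<ge> N}"
proof -
  have "(\<lambda>n. r ^ nat N * r ^ n) sums (r ^ nat N * (1 / (1 - r)))"
    by (intro sums_mult geometric_sums) (use assms in auto)
  then have sums: "(\<lambda>n. r ^ (n + nat N)) sums (r ^ nat N / (1 - r))"
    by (simp add: power_add mult.commute)
  then have "summable (\<lambda>n. norm (r ^ (n + nat N)))"
    using assms by (simp add: sums_iff)
  then have half: "((\<lambda>n. r ^ (n + nat N)) has_sum (r ^ nat N / (1 - r))) UNIV"
    using sums by (rule norm_summable_imp_has_sum)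
  have "nat \<bar>int n + N\<bar> = n + nat N" "nat \<bar>- (int n + N)\<bar> = n + nat N" for n
    using assms(3) by auto
  moreover have "bij_betw (\<lambda>n::nat. int n + N) UNIV {k. k \<ge> N}"
    by (rule bij_betwI[where g = "\<lambda>k. nat (k - N)"]) auto
  moreover have "bij_betw (\<lambda>n::nat. - (int n + N)) UNIV {k. k \<le> - N}"
    by (rule bij_betwI[where g = "\<lambda>k. nat (- k - N)"]) auto
  ultimately have "((\<lambda>k::int. r ^ nat \<bar>k\<bar>) has_sum (r ^ nat N / (1 - r))) {k. k \<ge> N}"
    and "((\<lambda>k::int. r ^ nat \<bar>k\<bar>) has_sum (r ^ nat N / (1 - r))) {k. k \<le> - N}"
    using half by (simp_all add: has_sum_reindex_bij_betw[symmetric] o_def)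
  then have "((\<lambda>k::int. r ^ nat \<bar>k\<bar>) has_sum (r ^ nat N / (1 - r) + r ^ nat N / (1 - r)))
      ({k. k \<ge> N} \<union> {k. k \<le> - N})"
    by (rule has_sum_Un_disjoint) (use assms(3) in auto)
  moreover have "{k. k \<ge> N} \<union> {k. k \<le> - N} = {k. \<bar>k\<bar> \<ge> N}"
    using assms(3) by auto
  ultimately show ?thesis
    by simp
qed

lemma summable_on_power_abs_int:
  fixes r :: real
  assumes "0 \<le> r" "r < 1"
  shows "(\<lambda>k::int. r ^ nat \<bar>k\<bar>) summable_on UNIV"
proof -
  have "(\<lambda>k::int. r ^ nat \<bar>k\<bar>) summable_on ({0} \<union> {k. \<bar>k\<bar> \<ge> 1})"
    by (rule summable_on_union)
       (use has_sum_power_abs_int_tail[OF assms, of 1] in \<open>auto dest: has_sum_imp_summable\<close>)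
  moreover have "{0} \<union> {k::int. \<bar>k\<bar> \<ge> 1} = UNIV"
    by auto
  ultimately show ?thesis
    by simp
qed

lemma neg_quadratic_le:
  fixes a c x :: real
  assumes "a > 0"
  shows "- a * x\<^sup>2 + c * x \<le> c\<^sup>2 / (4 * a)"
proof -
  have "0 \<le> (2 * a * x - c)\<^sup>2"
    by simp
  then have "4 * a * (- a * x\<^sup>2 + c * x) \<le> c\<^sup>2"
    by (simp add: power2_eq_square algebra_simps)
  then show ?thesis
    using assms by (simp add: field_simps)
qed

lemma
  fixes f g :: "'a \<Rightarrow> complex"
  assumes "(\<lambda>n. norm (f n)) summable_on UNIV" and "(\<lambda>n. norm (g n)) summable_on UNIV"
  shows summable_on_times_abs: "(\<lambda>(m, n). f m * g n) summable_on UNIV"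
    and infsum_times_infsum_abs: "infsum (\<lambda>(m, n). f m * g n) UNIV = infsum f UNIV * infsum g UNIV"
proof -
  have "((\<lambda>n. norm (f m) * norm (g n)) has_sum (norm (f m) * infsum (\<lambda>n. norm (g n)) UNIV)) UNIV" for m
    by (intro has_sum_cmult_right has_sum_infsum assms)
  then have "(\<lambda>(m, n). norm (f m) * norm (g n)) summable_on UNIV \<times> UNIV"
    by (intro summable_on_SigmaI[where g = "\<lambda>m. norm (f m) * infsum (\<lambda>n. norm (g n)) UNIV"])
       (auto intro: summable_on_cmult_left assms)
  then have "(\<lambda>p. norm ((\<lambda>(m, n). f m * g n) p)) summable_on UNIV"
    by (simp add: case_prod_unfold norm_mult)
  then show summable: "(\<lambda>(m, n). f m * g n) summable_on UNIV"
    by (rule abs_summable_summable)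
  have "infsum (\<lambda>(m, n). f m * g n) (Sigma UNIV (\<lambda>_. UNIV))
      = infsum (\<lambda>m. infsum (\<lambda>n. (\<lambda>(m, n). f m * g n) (m, n)) UNIV) UNIV"
    by (rule infsum_Sigma_banach[symmetric]) (use summable in simp)
  also have "\<dots> = infsum f UNIV * infsum g UNIV"
    by (simp add: infsum_cmult_right' infsum_cmult_left')
  finally show "infsum (\<lambda>(m, n). f m * g n) UNIV = infsum f UNIV * infsum g UNIV"
    by simp
qed

section \<open>Quadratic convergence along iterated squares\<close>

lemma iterated_squares_tendsto_zero:
  fixes q :: "nat \<Rightarrow> 'a::real_normed_div_algebra"
  assumes squares: "\<And>n. q (Suc n) = (q n)\<^sup>2" and "norm (q 0) < 1"
  shows "q \<longlonglongrightarrow> 0" and "norm (q n) < 1"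
proof -
  define r where "r = norm (q 0)"
  have r: "0 \<le> r" "r < 1"
    using assms(2) unfolding r_def by simp_all
  have norm_q: "norm (q n) = r ^ (2 ^ n)" for n
    unfolding r_def by (induction n) (simp_all add: squares norm_power mult.commute flip: power_mult)
  then show "norm (q n) < 1"
    using r by (simp add: power_less_one_iff)
  have "(\<lambda>n. r ^ n) \<longlonglongrightarrow> 0"
    using r by (intro LIMSEQ_power_zero) simp
  then have "((\<lambda>n. r ^ n) \<circ> (\<lambda>n::nat. 2 ^ n)) \<longlonglongrightarrow> 0"
    by (rule LIMSEQ_subseq_LIMSEQ) (simp add: strict_mono_def)
  then have "(\<lambda>n. norm (q n)) \<longlonglongrightarrow> 0"
    by (simp add: o_def norm_q)
  then show "q \<longlonglongrightarrow> 0"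
    by (rule tendsto_norm_zero_cancel)
qed

lemma quad_convergentI:
  assumes "a \<longlonglongrightarrow> l" and "C > 0"
    and "\<forall>\<^sub>F n in sequentially. cmod (a (Suc (Suc n)) - a (Suc n)) \<le> C * (cmod (a (Suc n) - a n))\<^sup>2"
  shows "quad_convergent a l"
  unfolding quad_convergent_def
  using assms eventually_sequentially_Suc[where P = "\<lambda>n. cmod (a (Suc n) - a n) \<le> C * (cmod (a n - a (n - 1)))\<^sup>2"]
  by auto

lemma squaring_factor_quadratic_bound:
  fixes p h :: "nat \<Rightarrow> complex"
  assumes squares: "\<And>n. p (Suc n) = (p n)\<^sup>2" and "h \<longlonglongrightarrow> L" and "L \<noteq> 0"
  shows "\<forall>\<^sub>F n in sequentially. cmod (p (Suc n) * h (Suc n)) \<le> 8 / cmod L * (cmod (p n * h n))\<^sup>2"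
proof -
  have "\<forall>\<^sub>F n in sequentially. dist (h n) L < cmod L / 2"
    using tendstoD[OF assms(2), of "cmod L / 2"] assms(3) by simp
  then have bounds: "\<forall>\<^sub>F n in sequentially. cmod L / 2 \<le> cmod (h n) \<and> cmod (h n) \<le> 2 * cmod L"
  proof (rule eventually_mono)
    fix n
    assume "dist (h n) L < cmod L / 2"
    then show "cmod L / 2 \<le> cmod (h n) \<and> cmod (h n) \<le> 2 * cmod L"
      using norm_triangle_ineq3[of "h n" L] by (auto simp: dist_norm abs_le_iff)
  qed
  then show ?thesis
  proof (rule eventually_mono[OF eventually_conj[OF _ eventually_sequentially_Suc[THEN iffD2, OF bounds]]])
    fix n
    assume "(cmod L / 2 \<le> cmod (h n) \<and> cmod (h n) \<le> 2 * cmod L) \<and>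
      (cmod L / 2 \<le> cmod (h (Suc n)) \<and> cmod (h (Suc n)) \<le> 2 * cmod L)"
    then have h_n: "cmod L / 2 \<le> cmod (h n)" and h_Suc: "cmod (h (Suc n)) \<le> 2 * cmod L"
      by simp_all
    then have "cmod (p (Suc n) * h (Suc n)) \<le> (cmod (p n))\<^sup>2 * (2 * cmod L)"
      by (auto simp: squares norm_mult norm_power intro!: mult_left_mono)
    also have "\<dots> = 8 / cmod L * (cmod (p n) * (cmod L / 2))\<^sup>2"
      using assms(3) by (simp add: power2_eq_square field_simps)
    also have "\<dots> \<le> 8 / cmod L * (cmod (p n * h n))\<^sup>2"
    proof -
      have "cmod (p n) * (cmod L / 2) \<le> cmod (p n * h n)"
        unfolding norm_mult using h_n by (intro mult_left_mono) auto
      then show ?thesis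
        by (intro mult_left_mono power_mono) auto
    qed
    finally show "cmod (p (Suc n) * h (Suc n)) \<le> 8 / cmod L * (cmod (p n * h n))\<^sup>2" .
  qed
qed

lemma holomorphic_square_difference_factor:
  assumes holo: "F holomorphic_on ball 0 1" and nonconst: "\<not> F constant_on ball 0 1"
  obtains m H \<rho> where "0 < \<rho>" "\<rho> \<le> 1" "isCont H 0" "H 0 \<noteq> 0"
    "\<And>u. u \<in> ball 0 \<rho> \<Longrightarrow> F (u\<^sup>2) - F u = u ^ m * H u"
proof -
  have holo': "(\<lambda>w. F w - F 0) holomorphic_on ball 0 1"
    using holo by (intro holomorphic_intros)
  have nonconst': "\<not> (\<lambda>w. F w - F 0) constant_on ball 0 1"
    using nonconst unfolding constant_on_def by (metis diff_add_cancel)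
  obtain G \<rho> m where m: "0 < m" and \<rho>: "0 < \<rho>" "ball 0 \<rho> \<subseteq> ball (0::complex) 1"
    and G: "G holomorphic_on ball 0 \<rho>"
    and factor: "\<And>w. w \<in> ball 0 \<rho> \<Longrightarrow> F w - F 0 = (w - 0) ^ m * G w"
    and G_nonzero: "\<And>w. w \<in> ball 0 \<rho> \<Longrightarrow> G w \<noteq> 0"
    by (rule holomorphic_factor_zero_nonconstant[OF holo' open_ball connected_ball _ _ nonconst']) auto
  have "\<rho> \<le> 1"
    using \<rho> by (simp add: ball_subset_ball_iff)
  have "isCont G 0"
    using holomorphic_on_imp_continuous_on[OF G] \<rho>(1) by (simp add: continuous_on_eq_continuous_at)
  then have "isCont (\<lambda>u. u ^ m * G (u\<^sup>2) - G u) 0"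
    by (intro continuous_intros isCont_o2[where f = "\<lambda>u. u\<^sup>2" and g = G]) auto
  moreover have "F (u\<^sup>2) - F u = u ^ m * (u ^ m * G (u\<^sup>2) - G u)" if "u \<in> ball 0 \<rho>" for u
  proof -
    have "norm u * norm u \<le> norm u"
      using that \<open>\<rho> \<le> 1\<close> by (intro mult_left_le_one_le) auto
    then have "u\<^sup>2 \<in> ball 0 \<rho>"
      using that by (simp add: norm_mult power2_eq_square)
    then show ?thesis
      using factor[of u] factor[of "u\<^sup>2"] that by (simp add: algebra_simps
          flip: power_mult power2_eq_square)
  qed
  ultimately show ?thesis
    using that[of \<rho> "\<lambda>u. u ^ m * G (u\<^sup>2) - G u" m] \<rho>(1) \<open>\<rho> \<le> 1\<close> G_nonzero[of 0] m by (simp add: zero_power)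
qed

lemma quad_convergent_holomorphic_iterated_squares:
  fixes F :: "complex \<Rightarrow> complex" and q :: "nat \<Rightarrow> complex"
  assumes holo: "F holomorphic_on ball 0 1"
    and squares: "\<And>n. q (Suc n) = (q n)\<^sup>2" and "norm (q 0) < 1"
  shows "quad_convergent (\<lambda>n. F (q n)) (F 0)"
proof -
  note q = iterated_squares_tendsto_zero[of q, OF squares assms(3)]
  have "isCont F 0"
    using holomorphic_on_imp_continuous_on[OF holo] by (simp add: continuous_on_eq_continuous_at)
  then have lim: "(\<lambda>n. F (q n)) \<longlonglongrightarrow> F 0"
    using q(1) by (rule isCont_tendsto_compose)
  show ?thesis
  proof (cases "F constant_on ball 0 1")
    case True
    then have "F (q n) = F 0" for n
      using q(2) unfolding constant_on_def by (metis mem_ball_0 norm_zero zero_less_one)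
    then show ?thesis
      by (intro quad_convergentI[OF lim, of 1]) simp_all
  next
    case False
    then obtain m H \<rho> where \<rho>: "0 < \<rho>" "\<rho> \<le> 1" and H: "isCont H 0" "H 0 \<noteq> 0"
      and factor: "\<And>u. u \<in> ball 0 \<rho> \<Longrightarrow> F (u\<^sup>2) - F u = u ^ m * H u"
      using holomorphic_square_difference_factor[OF holo] by blast
    have "\<forall>\<^sub>F n in sequentially. q n \<in> ball 0 \<rho>"
      using q(1) \<rho>(1) by (auto simp: tendsto_iff dist_norm)
    then have diff: "\<forall>\<^sub>F n in sequentially. F (q (Suc n)) - F (q n) = (q n) ^ m * H (q n)"
      by eventually_elim (simp add: squares factor)
    have "(\<lambda>n. H (q n)) \<longlonglongrightarrow> H 0"
      using H(1) q(1) by (rule isCont_tendsto_compose)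
    moreover have "q (Suc n) ^ m = ((q n) ^ m)\<^sup>2" for n
      by (simp add: squares flip: power_mult) (simp add: mult.commute)
    ultimately have "\<forall>\<^sub>F n in sequentially.
        cmod (q (Suc n) ^ m * H (q (Suc n))) \<le> 8 / cmod (H 0) * (cmod ((q n) ^ m * H (q n)))\<^sup>2"
      using H(2) by (intro squaring_factor_quadratic_bound) auto
    with diff eventually_sequentially_Suc[THEN iffD2, OF diff]
    have "\<forall>\<^sub>F n in sequentially.
        cmod (F (q (Suc (Suc n))) - F (q (Suc n))) \<le> 8 / cmod (H 0) * (cmod (F (q (Suc n)) - F (q n)))\<^sup>2"
      by eventually_elim simp
    then show ?thesis
      using H(2) by (intro quad_convergentI[OF lim, of "8 / cmod (H 0)"]) auto
  qed
qed

section \<open>The theta series and its duplication formula\<close>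

definition theta_term :: "complex \<Rightarrow> complex \<Rightarrow> int \<Rightarrow> complex" where
  "theta_term z \<tau> n =
     exp (complex_of_real pi * \<i> * \<tau> * (of_int n)\<^sup>2 + 2 * complex_of_real pi * \<i> * of_int n * z)"

lemma jtheta_eq_infsum: "jtheta z \<tau> = infsum (theta_term z \<tau>) UNIV"
  unfolding jtheta_def theta_term_def by simp

lemma norm_theta_term:
  "norm (theta_term z \<tau> n) = exp (- pi * Im \<tau> * (of_int n)\<^sup>2 - 2 * pi * of_int n * Im z)"
proof -
  have "Re (complex_of_real pi * \<i> * \<tau> * (of_int n)\<^sup>2 + 2 * complex_of_real pi * \<i> * of_int n * z)
      = - pi * Im \<tau> * (of_int n)\<^sup>2 - 2 * pi * of_int n * Im z"
    by (simp add: power2_eq_square algebra_simps)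
  then show ?thesis
    unfolding theta_term_def by simp
qed

lemma norm_theta_term_le:
  assumes "Im \<tau> > 0"
  shows "norm (theta_term z \<tau> n)
    \<le> exp ((2 * pi * \<bar>Im z\<bar> + 1)\<^sup>2 / (4 * (pi * Im \<tau>))) * exp (-1) ^ nat \<bar>n\<bar>"
proof -
  define c where "c = 2 * pi * \<bar>Im z\<bar> + 1"
  have "- (of_int n * Im z) \<le> \<bar>Im z\<bar> * \<bar>of_int n\<bar>"
    by (metis abs_ge_minus_self abs_mult mult.commute)
  then have "pi * (- (of_int n * Im z)) \<le> pi * (\<bar>Im z\<bar> * \<bar>of_int n\<bar>)"
    by (rule mult_left_mono) simp
  then have "- pi * Im \<tau> * (of_int n)\<^sup>2 - 2 * pi * of_int n * Im z
      \<le> - (pi * Im \<tau>) * \<bar>of_int n\<bar>\<^sup>2 + c * \<bar>of_int n\<bar> - \<bar>of_int n\<bar>"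
    unfolding c_def by (simp add: algebra_simps)
  also have "\<dots> \<le> c\<^sup>2 / (4 * (pi * Im \<tau>)) + of_nat (nat \<bar>n\<bar>) * (-1)"
    using neg_quadratic_le[where a = "pi * Im \<tau>" and c = c and x = "\<bar>of_int n\<bar>"] assms by simp
  finally show ?thesis
    unfolding norm_theta_term c_def exp_of_nat_mult[symmetric] exp_add[symmetric] by simp
qed

lemma theta_term_abs_summable:
  assumes "Im \<tau> > 0"
  shows "(\<lambda>n. norm (theta_term z \<tau> n)) summable_on UNIV"
proof (rule summable_on_comparison_test)
  show "(\<lambda>n::int. exp ((2 * pi * \<bar>Im z\<bar> + 1)\<^sup>2 / (4 * (pi * Im \<tau>))) * exp (-1) ^ nat \<bar>n\<bar>)
      summable_on UNIV"
    by (intro summable_on_cmult_right summable_on_power_abs_int) auto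
qed (use norm_theta_term_le[OF assms] in auto)

lemma theta_term_summable:
  assumes "Im \<tau> > 0"
  shows "theta_term z \<tau> summable_on A"
  by (rule summable_on_subset[OF abs_summable_summable[OF theta_term_abs_summable[OF assms]]]) simp

lemma exp_pi_int: "exp (complex_of_real pi * \<i> * of_int m) = (if even m then 1 else -1)"
proof (cases "even m")
  case True
  then obtain k where "m = 2 * k"
    by (auto elim: evenE)
  moreover have "exp ((2 * of_int k * pi) * \<i>) = 1"
    by (rule exp_integer_2pi) simp
  ultimately show ?thesis
    using True by (simp add: algebra_simps)
next
  case False
  then obtain k where "m = 2 * k + 1"
    by (auto elim: oddE)
  moreover have "exp (((2 * of_int k + 1) * pi) * \<i>) = -1"
    by (rule exp_integer_2pi_plus1) simp
  ultimately show ?thesis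
    using False by (simp add: algebra_simps)
qed

lemma theta_term_add_half: "theta_term (z + 1/2) \<tau> m = (if even m then 1 else -1) * theta_term z \<tau> m"
proof -
  have "theta_term (z + 1/2) \<tau> m = exp ((complex_of_real pi * \<i> * \<tau> * (of_int m)\<^sup>2
      + 2 * complex_of_real pi * \<i> * of_int m * z) + complex_of_real pi * \<i> * of_int m)"
    unfolding theta_term_def by (rule arg_cong[where f = exp]) (simp add: algebra_simps)
  then show ?thesis
    unfolding exp_add exp_pi_int theta_term_def by simp
qed

lemma jtheta_add_one: "jtheta (z + 1) \<tau> = jtheta z \<tau>"
proof -
  have "theta_term (z + 1) \<tau> = theta_term z \<tau>"
  proof
    fix m
    have "theta_term (z + 1) \<tau> m = theta_term ((z + 1/2) + 1/2) \<tau> m"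
      by (simp add: add.assoc)
    also have "\<dots> = theta_term z \<tau> m"
      unfolding theta_term_add_half by simp
    finally show "theta_term (z + 1) \<tau> m = theta_term z \<tau> m" .
  qed
  then show ?thesis
    unfolding jtheta_eq_infsum by simp
qed

lemma theta_term_mult_duplication:
  "theta_term x \<tau> (j + k) * theta_term y \<tau> (j - k) = theta_term (x + y) (2 * \<tau>) j * theta_term (x - y) (2 * \<tau>) k"
  unfolding theta_term_def exp_add[symmetric]
  by (rule arg_cong[where f = exp]) (simp add: power2_eq_square algebra_simps)

lemma bij_betw_sum_diff: "bij_betw (\<lambda>(j::int, k). (j + k, j - k)) UNIV {(m, n). even (m + n)}"
proof (rule bij_betwI[where g = "\<lambda>(m, n). ((m + n) div 2, (m - n) div 2)"])
  fix p :: "int \<times> int"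
  assume "p \<in> {(m, n). even (m + n)}"
  moreover obtain m n where p: "p = (m, n)"
    by (cases p)
  ultimately have "even (m + n)"
    by simp
  then obtain k where "m + n = 2 * k"
    by (rule evenE)
  then have "(m + n) div 2 = k" "(m - n) div 2 = k - n"
    by simp_all
  then show "(\<lambda>(j, k). (j + k, j - k)) ((\<lambda>(m, n). ((m + n) div 2, (m - n) div 2)) p) = p"
    unfolding p using \<open>m + n = 2 * k\<close> by auto
qed auto

text \<open>The terms of both products with \<open>m + n\<close> odd cancel, and the index pairs with \<open>m + n\<close> even
  are exactly the pairs \<open>(j + k, j - k)\<close>.\<close>
lemma jtheta_duplication:
  assumes "Im \<tau> > 0"
  shows "jtheta x \<tau> * jtheta y \<tau> + jtheta (x + 1/2) \<tau> * jtheta (y + 1/2) \<tau>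
       = 2 * (jtheta (x + y) (2 * \<tau>) * jtheta (x - y) (2 * \<tau>))"
proof -
  define h where "h = (\<lambda>(m, n). theta_term x \<tau> m * theta_term y \<tau> n)"
  define h' where "h' = (\<lambda>(m, n). theta_term (x + 1/2) \<tau> m * theta_term (y + 1/2) \<tau> n)"
  note products = summable_on_times_abs infsum_times_infsum_abs
  have "h summable_on UNIV" "h' summable_on UNIV"
    and "infsum h UNIV = jtheta x \<tau> * jtheta y \<tau>"
    and "infsum h' UNIV = jtheta (x + 1/2) \<tau> * jtheta (y + 1/2) \<tau>"
    unfolding h_def h'_def jtheta_eq_infsum using assms by (intro products theta_term_abs_summable; simp)+
  then have "jtheta x \<tau> * jtheta y \<tau> + jtheta (x + 1/2) \<tau> * jtheta (y + 1/2) \<tau>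
      = infsum (\<lambda>p. h p + h' p) UNIV"
    by (simp add: infsum_add)
  also have "\<dots> = infsum (\<lambda>p. if p \<in> {(m, n). even (m + n)} then 2 * h p else 0) UNIV"
  proof (rule infsum_cong)
    fix p :: "int \<times> int"
    obtain m n where p: "p = (m, n)"
      by (cases p)
    show "h p + h' p = (if p \<in> {(m, n). even (m + n)} then 2 * h p else 0)"
      unfolding p h_def h'_def theta_term_add_half by auto
  qed
  also have "\<dots> = 2 * infsum h {(m, n). even (m + n)}"
    by (subst infsum_cong_neutral[where T = "{(m, n). even (m + n)}"]) (auto simp: infsum_cmult_right')
  also have "infsum h {(m, n). even (m + n)} = infsum (\<lambda>p. h ((\<lambda>(j, k). (j + k, j - k)) p)) UNIV"
    by (rule infsum_reindex_bij_betw[OF bij_betw_sum_diff, symmetric])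
  also have "\<dots> = infsum (\<lambda>(j, k). theta_term (x + y) (2 * \<tau>) j * theta_term (x - y) (2 * \<tau>) k) UNIV"
    by (rule infsum_cong) (auto simp: h_def theta_term_mult_duplication)
  also have "\<dots> = jtheta (x + y) (2 * \<tau>) * jtheta (x - y) (2 * \<tau>)"
    unfolding jtheta_eq_infsum using assms by (intro products theta_term_abs_summable) simp_all
  finally show ?thesis .
qed

lemma theta00_square_duplication:
  assumes "Im \<tau> > 0"
  shows "(theta00 w \<tau> * theta00 0 \<tau> + theta01 w \<tau> * theta01 0 \<tau>) / 2 = (theta00 w (2 * \<tau>))\<^sup>2"
  using jtheta_duplication[OF assms, of w 0] unfolding theta00_def theta01_def
  by (simp add: power2_eq_square)

lemma theta01_square_duplication:
  assumes "Im \<tau> > 0"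
  shows "(theta00 w \<tau> * theta01 0 \<tau> + theta01 w \<tau> * theta00 0 \<tau>) / 2 = (theta01 w (2 * \<tau>))\<^sup>2"
proof -
  have "jtheta (1/2 + 1/2) \<tau> = jtheta 0 \<tau>"
    using jtheta_add_one[of 0 \<tau>] by simp
  moreover have "jtheta (w - 1/2) (2 * \<tau>) = jtheta (w + 1/2) (2 * \<tau>)"
    using jtheta_add_one[of "w - 1/2" "2 * \<tau>"] by (simp add: algebra_simps)
  ultimately show ?thesis
    using jtheta_duplication[OF assms, of w "1/2"] unfolding theta00_def theta01_def
    by (simp add: power2_eq_square)
qed

section \<open>The good square roots are the theta values\<close>

lemma exp_neg_sqrt3_pi_le: "exp (- pi * (sqrt 3 / 4) / 2) \<le> 27/50"
proof -
  have "sqrt 3 \<ge> (1.732::real)"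
    by (rule real_le_rsqrt) (simp add: power2_eq_square)
  then have "pi * (sqrt 3 / 4) \<ge> 3 * (1.732 / 4)"
    using pi_gt3 by (intro mult_mono) auto
  then have "pi * (sqrt 3 / 4) / 2 \<ge> 0.6495"
    by simp
  then have "1 + 0.6495 + 0.6495\<^sup>2 / 2 \<le> 1 + pi * (sqrt 3 / 4) / 2 + (pi * (sqrt 3 / 4) / 2)\<^sup>2 / 2"
    by (intro add_mono power_mono divide_right_mono) auto
  also have "\<dots> \<le> exp (pi * (sqrt 3 / 4) / 2)"
    by (rule exp_lower_Taylor_quadratic) simp
  finally have "50/27 \<le> exp (pi * (sqrt 3 / 4) / 2)"
    by (simp add: power2_eq_square)
  then show ?thesis
    by (simp add: exp_minus field_simps)
qed

locale theta_strip =
  fixes \<tau> x :: complex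
  assumes Im_\<tau>_ge: "Im \<tau> \<ge> sqrt 3 / 4" and Im_x_ge: "0 \<le> Im x" and Im_x_le: "Im x \<le> Im \<tau> / 4"
begin

lemma Im_\<tau>_pos: "Im \<tau> > 0"
proof -
  have "sqrt 3 / 4 > (0::real)"
    by simp
  then show ?thesis
    using Im_\<tau>_ge by linarith
qed

text \<open>\<open>s\<close> is \<open>\<bar>q\<bar>\<^sup>1\<^sup>/\<^sup>2\<close> for the nome \<open>q = exp (\<pi> i \<tau>)\<close>.\<close>
definition s :: real where "s = exp (- pi * Im \<tau> / 2)"

lemma s_nonneg: "s \<ge> 0"
  unfolding s_def by simp

lemma s_le: "s \<le> 27/50"
proof -
  have "pi * (sqrt 3 / 4) \<le> pi * Im \<tau>"
    using Im_\<tau>_ge by (intro mult_left_mono) auto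
  then have "s \<le> exp (- pi * (sqrt 3 / 4) / 2)"
    unfolding s_def by simp
  then show ?thesis
    using exp_neg_sqrt3_pi_le by linarith
qed

lemma norm_theta_term_one: "norm (theta_term x \<tau> 1) \<le> s\<^sup>2"
proof -
  have "norm (theta_term x \<tau> 1) \<le> exp (of_nat 2 * (- pi * Im \<tau> / 2))"
    unfolding norm_theta_term using Im_x_ge Im_\<tau>_pos by simp
  then show ?thesis
    unfolding exp_of_nat_mult s_def .
qed

lemma norm_theta_term_minus_one: "norm (theta_term x \<tau> (-1)) \<le> s"
proof -
  have "pi * (Im x * 4) \<le> pi * Im \<tau>"
    using Im_x_le by (intro mult_left_mono) auto
  then have "2 * (pi * Im x) \<le> pi * Im \<tau> / 2"
    by (simp add: algebra_simps)
  then show ?thesis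
    unfolding norm_theta_term s_def by (simp add: algebra_simps)
qed

lemma norm_theta_term_tail:
  assumes "\<bar>k\<bar> \<ge> 2"
  shows "norm (theta_term x \<tau> k) \<le> (s ^ 3) ^ nat \<bar>k\<bar>"
proof -
  have "- (of_int k * Im x) \<le> \<bar>of_int k\<bar> * Im x"
    using Im_x_ge by (metis abs_ge_minus_self abs_mult abs_of_nonneg)
  also have "\<dots> \<le> \<bar>of_int k\<bar> * (Im \<tau> / 4)"
    using Im_x_le by (intro mult_left_mono) auto
  finally have "pi * (- (of_int k * Im x)) \<le> pi * (\<bar>of_int k\<bar> * (Im \<tau> / 4))"
    by (intro mult_left_mono) auto
  then have linear: "- 2 * (pi * of_int k * Im x) \<le> pi * Im \<tau> * \<bar>of_int k\<bar> / 2"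
    by (simp add: algebra_simps)
  have "pi * Im \<tau> * (2 * \<bar>of_int k\<bar>) \<le> pi * Im \<tau> * (of_int k)\<^sup>2"
  proof -
    have "2 * \<bar>real_of_int k\<bar> \<le> \<bar>of_int k\<bar> * \<bar>of_int k\<bar>"
      using assms by (intro mult_right_mono) auto
    then show ?thesis
      using Im_\<tau>_pos by (intro mult_left_mono) (auto simp: power2_eq_square)
  qed
  then have "2 * (pi * Im \<tau> * \<bar>of_int k\<bar>) \<le> pi * Im \<tau> * (of_int k)\<^sup>2"
    by (simp add: algebra_simps)
  then have "- (pi * Im \<tau> * (of_int k)\<^sup>2) - 2 * (pi * of_int k * Im x)
      \<le> - 3 / 2 * (pi * Im \<tau> * \<bar>of_int k\<bar>)"
    using linear by linarith
  then have "- pi * Im \<tau> * (of_int k)\<^sup>2 - 2 * pi * of_int k * Im x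
      \<le> of_nat (nat \<bar>k\<bar>) * (of_nat 3 * (- pi * Im \<tau> / 2))"
    by (simp add: algebra_simps)
  then show ?thesis
    unfolding norm_theta_term s_def exp_of_nat_mult[symmetric] by simp
qed

lemma norm_theta_tail_le: "norm (infsum (theta_term x \<tau>) {k. \<bar>k\<bar> \<ge> 2}) \<le> 3/50"
proof -
  define r where "r = s ^ 3"
  have r: "0 \<le> r" "r \<le> 79/500"
  proof -
    show "0 \<le> r" unfolding r_def using s_nonneg by simp
    have "s ^ 3 \<le> (27/50) ^ 3"
      using s_nonneg s_le by (intro power_mono)
    then show "r \<le> 79/500" unfolding r_def by (simp add: power3_eq_cube)
  qed
  have sum_r: "((\<lambda>k::int. r ^ nat \<bar>k\<bar>) has_sum (2 * r\<^sup>2 / (1 - r))) {k. \<bar>k\<bar> \<ge> 2}"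
    using has_sum_power_abs_int_tail[of r 2] r by simp
  have summable: "(\<lambda>k. norm (theta_term x \<tau> k)) summable_on {k. \<bar>k\<bar> \<ge> 2}"
    by (rule summable_on_subset[OF theta_term_abs_summable[OF Im_\<tau>_pos]]) simp
  have "norm (infsum (theta_term x \<tau>) {k. \<bar>k\<bar> \<ge> 2}) \<le> infsum (\<lambda>k. norm (theta_term x \<tau> k)) {k. \<bar>k\<bar> \<ge> 2}"
    by (rule norm_infsum_bound) (rule summable)
  also have "\<dots> \<le> infsum (\<lambda>k::int. r ^ nat \<bar>k\<bar>) {k. \<bar>k\<bar> \<ge> 2}"
    by (rule infsum_mono[OF summable has_sum_imp_summable[OF sum_r]])
       (use norm_theta_term_tail in \<open>auto simp: r_def\<close>)
  also have "\<dots> = 2 * r\<^sup>2 / (1 - r)"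
    using sum_r by (rule infsumI)
  also have "\<dots> \<le> 3/50"
  proof -
    have "r\<^sup>2 \<le> (79/500)\<^sup>2"
      using r by (intro power_mono)
    then show ?thesis
      using r by (simp add: field_simps power2_eq_square)
  qed
  finally show ?thesis .
qed

lemma jtheta_split: "jtheta x \<tau> = 1 + (theta_term x \<tau> 1 + theta_term x \<tau> (-1)) + infsum (theta_term x \<tau>) {k. \<bar>k\<bar> \<ge> 2}"
proof -
  have "jtheta x \<tau> = infsum (theta_term x \<tau>) ({-1, 0, 1} \<union> {k. \<bar>k\<bar> \<ge> 2})"
    unfolding jtheta_eq_infsum by (rule arg_cong[where f = "infsum _"]) auto
  also have "\<dots> = infsum (theta_term x \<tau>) {-1, 0, 1} + infsum (theta_term x \<tau>) {k. \<bar>k\<bar> \<ge> 2}"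
    by (rule infsum_Un_disjoint) (auto intro: theta_term_summable[OF Im_\<tau>_pos])
  also have "infsum (theta_term x \<tau>) {-1, 0, 1} = theta_term x \<tau> (-1) + 1 + theta_term x \<tau> 1"
    by (simp add: theta_term_def)
  finally show ?thesis
    by (simp add: algebra_simps)
qed

end

text \<open>With \<open>s\<close> as in \<open>theta_strip\<close>: \<open>\<theta>(w) = 1 + u + R\<close> and \<open>\<theta>(w + \<onehalf>) = 1 - u + R'\<close> where
  \<open>\<bar>u\<bar> \<le> s + s\<^sup>2 < 0.84\<close> and \<open>\<bar>R\<bar>, \<bar>R'\<bar> \<le> 0.06\<close>.\<close>
lemma jtheta_good_root_conditions:
  assumes "Im \<tau> \<ge> sqrt 3 / 4" and "0 \<le> Im w" and "Im w \<le> Im \<tau> / 4"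
  shows "Re (jtheta w \<tau>) > 0"
    and "cmod (jtheta w \<tau> - jtheta (w + 1/2) \<tau>) < cmod (jtheta w \<tau> + jtheta (w + 1/2) \<tau>)"
proof -
  interpret w: theta_strip \<tau> w
    using assms by unfold_locales
  interpret w': theta_strip \<tau> "w + 1/2"
    using assms by unfold_locales auto
  define u where "u = theta_term w \<tau> 1 + theta_term w \<tau> (-1)"
  define R where "R = infsum (theta_term w \<tau>) {k. \<bar>k\<bar> \<ge> 2}"
  define R' where "R' = infsum (theta_term (w + 1/2) \<tau>) {k. \<bar>k\<bar> \<ge> 2}"
  have \<theta>: "jtheta w \<tau> = 1 + u + R"
    using w.jtheta_split unfolding u_def R_def .
  have \<theta>': "jtheta (w + 1/2) \<tau> = 1 - u + R'"
    using w'.jtheta_split unfolding u_def R'_def theta_term_add_half by simp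
  have R: "cmod R \<le> 3/50" and R': "cmod R' \<le> 3/50"
    using w.norm_theta_tail_le w'.norm_theta_tail_le unfolding R_def R'_def by simp_all
  have "cmod u \<le> w.s\<^sup>2 + w.s"
    unfolding u_def using norm_triangle_le w.norm_theta_term_one w.norm_theta_term_minus_one
    by (meson add_mono)
  also have "\<dots> \<le> (27/50)\<^sup>2 + 27/50"
    using w.s_nonneg w.s_le by (intro add_mono power_mono)
  finally have u: "cmod u \<le> 2079/2500"
    by (simp add: power2_eq_square)
  have "Re (jtheta w \<tau>) = 1 + Re u + Re R"
    unfolding \<theta> by simp
  moreover have "- Re u \<le> cmod u" "- Re R \<le> cmod R"
    using abs_Re_le_cmod[of u] abs_Re_le_cmod[of R] by linarith+
  ultimately show "Re (jtheta w \<tau>) > 0"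
    using u R by linarith
  have "jtheta w \<tau> - jtheta (w + 1/2) \<tau> = 2 * u + (R - R')"
    unfolding \<theta> \<theta>' by simp
  then have "cmod (jtheta w \<tau> - jtheta (w + 1/2) \<tau>) \<le> 2 * cmod u + (cmod R + cmod R')"
    using norm_triangle_ineq[of "2 * u" "R - R'"] norm_triangle_ineq4[of R R'] by (simp add: norm_mult)
  moreover have "jtheta w \<tau> + jtheta (w + 1/2) \<tau> = 2 + (R + R')"
    unfolding \<theta> \<theta>' by simp
  then have "2 - (cmod R + cmod R') \<le> cmod (jtheta w \<tau> + jtheta (w + 1/2) \<tau>)"
    using norm_diff_ineq[of 2 "R + R'"] norm_triangle_ineq[of R R'] by simp
  ultimately show "cmod (jtheta w \<tau> - jtheta (w + 1/2) \<tau>) < cmod (jtheta w \<tau> + jtheta (w + 1/2) \<tau>)"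
    using u R R' by linarith
qed

lemma good_roots_eq:
  assumes "good_roots (A\<^sup>2) (B\<^sup>2) a b" and "Re A > 0" and "cmod (A - B) < cmod (A + B)"
  shows "a = A \<and> b = B"
proof -
  have "a = A \<or> a = - A" "b = B \<or> b = - B"
    using assms(1) unfolding good_roots_def by (simp_all add: power2_eq_iff)
  moreover have "Re a \<ge> 0"
    and "cmod (a - b) < cmod (a + b) \<or> cmod (a - b) = cmod (a + b) \<and> Im (b / a) > 0"
    using assms(1) unfolding good_roots_def by auto
  ultimately show ?thesis
    using assms(2,3) by (auto simp: norm_minus_commute add.commute)
qed

lemma Im_power2_times: "Im ((2::complex) ^ n * \<tau>) = 2 ^ n * Im \<tau>"
proof -
  have "(2::complex) ^ n = complex_of_real (2 ^ n)"
    by simp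
  then show ?thesis
    by simp
qed

lemma optimal_F_seq_theta:
  assumes \<tau>: "Im \<tau> > 0" "Im \<tau> \<ge> sqrt 3 / 4" and w: "0 \<le> Im w" "Im w \<le> Im \<tau> / 4"
    and F: "optimal_F_seq x y z t ((theta00 w \<tau>)\<^sup>2) ((theta01 w \<tau>)\<^sup>2) ((theta00 0 \<tau>)\<^sup>2) ((theta01 0 \<tau>)\<^sup>2)"
  shows "x n = (theta00 w (2 ^ n * \<tau>))\<^sup>2 \<and> y n = (theta01 w (2 ^ n * \<tau>))\<^sup>2 \<and>
    z n = (theta00 0 (2 ^ n * \<tau>))\<^sup>2 \<and> t n = (theta01 0 (2 ^ n * \<tau>))\<^sup>2"
proof (induction n)
  case 0
  then show ?case
    using F unfolding optimal_F_seq_def by simp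
next
  case (Suc n)
  define T where "T = (2::complex) ^ n * \<tau>"
  have "1 * Im \<tau> \<le> 2 ^ n * Im \<tau>"
    using \<tau>(1) by (intro mult_right_mono) auto
  then have T: "Im T \<ge> sqrt 3 / 4" "Im T > 0" "Im w \<le> Im T / 4"
    using \<tau> w(2) unfolding T_def Im_power2_times by linarith+
  have IH: "x n = (jtheta w T)\<^sup>2" "y n = (jtheta (w + 1/2) T)\<^sup>2"
    "z n = (jtheta 0 T)\<^sup>2" "t n = (jtheta (0 + 1/2) T)\<^sup>2"
    using Suc.IH unfolding T_def theta00_def theta01_def by auto
  obtain a b c d where roots: "good_roots (x n) (y n) a b" "good_roots (z n) (t n) c d"
    and step: "x (Suc n) = (a * c + b * d) / 2" "y (Suc n) = (a * d + b * c) / 2"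
      "z (Suc n) = (z n + t n) / 2" "t (Suc n) = c * d"
    using F unfolding optimal_F_seq_def by blast
  have "a = theta00 w T \<and> b = theta01 w T" "c = theta00 0 T \<and> d = theta01 0 T"
    using good_roots_eq[OF _ jtheta_good_root_conditions[OF T(1) w(1) T(3)]]
      good_roots_eq[OF _ jtheta_good_root_conditions[OF T(1), of 0]] T(2) roots
    unfolding IH theta00_def theta01_def by simp_all
  moreover have double: "2 ^ Suc n * \<tau> = 2 * T"
    unfolding T_def by simp
  ultimately show ?case
    using Suc.IH[folded T_def] theta00_square_duplication[OF T(2), of w]
      theta01_square_duplication[OF T(2), of w] theta00_square_duplication[OF T(2), of 0]
      theta01_square_duplication[OF T(2), of 0]
    unfolding step double by (simp add: power2_eq_square mult.commute)
qed

section \<open>Theta as a holomorphic function of the nome\<close>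

definition theta_nome_term :: "complex \<Rightarrow> complex \<Rightarrow> int \<Rightarrow> complex" where
  "theta_nome_term z q k = q ^ nat (k\<^sup>2) * exp (2 * complex_of_real pi * \<i> * of_int k * z)"

definition theta_nome :: "complex \<Rightarrow> complex \<Rightarrow> complex" where
  "theta_nome z q = infsum (theta_nome_term z q) UNIV"

lemma theta_term_eq_nome_term: "theta_term z \<tau> k = theta_nome_term z (exp (complex_of_real pi * \<i> * \<tau>)) k"
proof -
  have "of_nat (nat (k\<^sup>2)) = (of_int k :: complex)\<^sup>2"
    by (metis of_int_of_nat_eq of_int_power zero_le_power2 nat_0_le)
  then have "exp (complex_of_real pi * \<i> * \<tau> * (of_int k)\<^sup>2)
      = exp (of_nat (nat (k\<^sup>2)) * (complex_of_real pi * \<i> * \<tau>))"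
    by (simp add: algebra_simps)
  also have "\<dots> = exp (complex_of_real pi * \<i> * \<tau>) ^ nat (k\<^sup>2)"
    by (rule exp_of_nat_mult)
  finally show ?thesis
    unfolding theta_term_def theta_nome_term_def exp_add by simp
qed

lemma jtheta_eq_theta_nome: "jtheta z \<tau> = theta_nome z (exp (complex_of_real pi * \<i> * \<tau>))"
  unfolding jtheta_eq_infsum theta_nome_def theta_term_eq_nome_term ..

lemma norm_theta_nome_term:
  "norm (theta_nome_term z q k) = norm q ^ nat (k\<^sup>2) * exp (- 2 * pi * of_int k * Im z)"
  unfolding theta_nome_term_def by (simp add: norm_mult norm_power)

text \<open>The majorant is \<open>norm \<circ> theta_term z \<tau>\<close> for the \<open>\<tau>\<close> on the imaginary axis with
  \<open>\<bar>exp (\<pi> i \<tau>)\<bar> = \<rho>\<close>.\<close>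
lemma theta_nome_majorant_summable:
  assumes "0 < \<rho>" "\<rho> < 1"
  shows "(\<lambda>k::int. \<rho> ^ nat (k\<^sup>2) * exp (- 2 * pi * of_int k * Im z)) summable_on UNIV"
proof -
  define \<tau> where "\<tau> = \<i> * complex_of_real (- ln \<rho> / pi)"
  have "Im \<tau> > 0"
    unfolding \<tau>_def using assms by (simp add: divide_neg_pos)
  moreover have "norm (theta_term z \<tau> k) = \<rho> ^ nat (k\<^sup>2) * exp (- 2 * pi * of_int k * Im z)" for k
  proof -
    have "real (nat (k\<^sup>2)) = (of_int k)\<^sup>2"
      by simp
    then have "- pi * Im \<tau> * (of_int k)\<^sup>2 = of_nat (nat (k\<^sup>2)) * ln \<rho>"
      unfolding \<tau>_def by simp
    then have "norm (theta_term z \<tau> k) = exp (of_nat (nat (k\<^sup>2)) * ln \<rho>) * exp (- 2 * pi * of_int k * Im z)"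
      unfolding norm_theta_term by (simp add: exp_diff exp_add exp_minus field_simps)
    also have "exp (of_nat (nat (k\<^sup>2)) * ln \<rho>) = \<rho> ^ nat (k\<^sup>2)"
      unfolding exp_of_nat_mult using assms by simp
    finally show ?thesis .
  qed
  ultimately show ?thesis
    using theta_term_abs_summable[of \<tau> z] by simp
qed

lemma theta_nome_term_abs_summable:
  assumes "norm q < 1"
  shows "(\<lambda>k. norm (theta_nome_term z q k)) summable_on UNIV"
proof (rule summable_on_comparison_test)
  show "(\<lambda>k::int. ((1 + norm q) / 2) ^ nat (k\<^sup>2) * exp (- 2 * pi * of_int k * Im z)) summable_on UNIV"
    using assms by (intro theta_nome_majorant_summable) (auto simp: add_pos_nonneg)
  have "norm q \<le> (1 + norm q) / 2"
    using assms by simp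
  then show "norm (theta_nome_term z q k)
      \<le> ((1 + norm q) / 2) ^ nat (k\<^sup>2) * exp (- 2 * pi * of_int k * Im z)" for k
    unfolding norm_theta_nome_term by (auto intro!: mult_right_mono power_mono)
qed simp

lemma theta_nome_eq_suminf:
  assumes "norm q < 1"
  shows "theta_nome z q = (\<Sum>i. theta_nome_term z q (int_decode i))"
proof -
  have "(theta_nome_term z q has_sum theta_nome z q) UNIV"
    unfolding theta_nome_def
    by (rule has_sum_infsum, rule abs_summable_summable, rule theta_nome_term_abs_summable[OF assms])
  then have "((\<lambda>i. theta_nome_term z q (int_decode i)) has_sum theta_nome z q) UNIV"
    using has_sum_reindex_bij_betw[OF bij_int_decode, of "theta_nome_term z q"] by simp
  then have "(\<lambda>i. theta_nome_term z q (int_decode i)) sums theta_nome z q"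
    by (rule has_sum_imp_sums)
  then show ?thesis
    by (simp add: sums_iff)
qed

lemma holomorphic_theta_nome: "theta_nome z holomorphic_on ball 0 1"
proof -
  define g where "g = (\<lambda>q. \<Sum>i. theta_nome_term z q (int_decode i))"
  have "g holomorphic_on ball 0 1"
  proof (rule holomorphic_uniform_sequence[where f = "\<lambda>N q. \<Sum>i<N. theta_nome_term z q (int_decode i)"])
    show "(\<lambda>q. \<Sum>i<N. theta_nome_term z q (int_decode i)) holomorphic_on ball 0 1" for N
      unfolding theta_nome_term_def by (intro holomorphic_intros)
    fix q :: complex
    assume q: "q \<in> ball 0 1"
    define d where "d = (1 - norm q) / 2"
    define \<rho> where "\<rho> = (1 + norm q) / 2"
    have near: "norm q' \<le> \<rho>" if "q' \<in> cball q d" for q'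
    proof -
      have "norm (q' - q) \<le> d"
        using that by (simp add: dist_norm norm_minus_commute)
      then show ?thesis
        using norm_triangle_sub[of q' q] unfolding d_def \<rho>_def by simp
    qed
    have "uniform_limit (cball q d) (\<lambda>N q. \<Sum>i<N. theta_nome_term z q (int_decode i)) g sequentially"
      unfolding g_def
    proof (rule Weierstrass_m_test)
      show "norm (theta_nome_term z q' (int_decode n))
          \<le> \<rho> ^ nat ((int_decode n)\<^sup>2) * exp (- 2 * pi * of_int (int_decode n) * Im z)"
        if "q' \<in> cball q d" for n q'
        unfolding norm_theta_nome_term using near[OF that] by (intro mult_right_mono power_mono) auto
      have "(\<lambda>k::int. \<rho> ^ nat (k\<^sup>2) * exp (- 2 * pi * of_int k * Im z)) summable_on UNIV"
        using q unfolding \<rho>_def by (intro theta_nome_majorant_summable) (auto simp: add_pos_nonneg)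
      then have "(\<lambda>n. \<rho> ^ nat ((int_decode n)\<^sup>2) * exp (- 2 * pi * of_int (int_decode n) * Im z))
          summable_on UNIV"
        using summable_on_reindex_bij_betw[OF bij_int_decode,
            of "\<lambda>k::int. \<rho> ^ nat (k\<^sup>2) * exp (- 2 * pi * of_int k * Im z)"] by simp
      then show "summable (\<lambda>n. \<rho> ^ nat ((int_decode n)\<^sup>2) * exp (- 2 * pi * of_int (int_decode n) * Im z))"
        by (rule summable_on_imp_summable)
    qed
    moreover have "d > 0" "\<rho> < 1"
      using q unfolding d_def \<rho>_def by simp_all
    moreover have "cball q d \<subseteq> ball 0 1"
    proof
      fix q'
      assume "q' \<in> cball q d"
      then have "norm q' \<le> \<rho>"
        by (rule near)
      with \<open>\<rho> < 1\<close> show "q' \<in> ball 0 1"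
        by simp
    qed
    ultimately show "\<exists>d>0. cball q d \<subseteq> ball 0 1 \<and>
        uniform_limit (cball q d) (\<lambda>N q. \<Sum>i<N. theta_nome_term z q (int_decode i)) g sequentially"
      by blast
  qed (rule open_ball)
  then show ?thesis
    by (rule holomorphic_transform) (simp add: g_def theta_nome_eq_suminf)
qed

lemma theta_nome_zero: "theta_nome z 0 = 1"
proof -
  have "theta_nome z 0 = infsum (theta_nome_term z 0) {0}"
    unfolding theta_nome_def by (rule infsum_cong_neutral) (auto simp: theta_nome_term_def)
  then show ?thesis
    by (simp add: theta_nome_term_def)
qed

theorem mainTheorem7:
  fixes \<tau> w :: complex and x y z t :: "nat \<Rightarrow> complex"
  assumes "Im \<tau> > 0" and "Im \<tau> \<ge> sqrt 3 / 4"
    and "0 \<le> Im w" and "Im w \<le> Im \<tau> / 4"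
    and "optimal_F_seq x y z t ((theta00 w \<tau>)^2) ((theta01 w \<tau>)^2) ((theta00 0 \<tau>)^2) ((theta01 0 \<tau>)^2)"
  shows "quad_convergent x 1 \<and> quad_convergent y 1 \<and> quad_convergent z 1 \<and> quad_convergent t 1"
proof -
  define q where "q n = exp (complex_of_real pi * \<i> * (2 ^ n * \<tau>))" for n
  have squares: "q (Suc n) = (q n)\<^sup>2" for n
  proof -
    have double: "complex_of_real pi * \<i> * (2 ^ Suc n * \<tau>) = of_nat 2 * (complex_of_real pi * \<i> * (2 ^ n * \<tau>))"
      by simp
    show ?thesis
      unfolding q_def by (simp only: double exp_of_nat_mult)
  qed
  have "norm (q 0) < 1"
    unfolding q_def using assms(1) by simp
  then have conv: "quad_convergent (\<lambda>n. (theta_nome v (q n))\<^sup>2) 1" for v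
    using quad_convergent_holomorphic_iterated_squares[of "\<lambda>u. (theta_nome v u)\<^sup>2" q, OF _ squares]
      holomorphic_theta_nome[of v]
    by (simp add: theta_nome_zero holomorphic_on_power)
  have seqs: "x = (\<lambda>n. (theta_nome w (q n))\<^sup>2)" "y = (\<lambda>n. (theta_nome (w + 1/2) (q n))\<^sup>2)"
    "z = (\<lambda>n. (theta_nome 0 (q n))\<^sup>2)" "t = (\<lambda>n. (theta_nome (0 + 1/2) (q n))\<^sup>2)"
    using optimal_F_seq_theta[OF assms] unfolding q_def theta00_def theta01_def jtheta_eq_theta_nome
    by (simp_all add: fun_eq_iff)
  show ?thesis
    unfolding seqs using conv[of w] conv[of "w + 1/2"] conv[of 0] conv[of "0 + 1/2"] by blast
qed

end
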